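(* Let $n\geq 1$, $0\leq p\leq1$, and $1\leq k<n$. Then $$\Pr_p(PC^-_{[k]})=2^k\bigl(p^{2^n-2^{n-k}}-p^{2^n}\bigr),\qquad \Pr_p(NC^-_{[k]})=2^k\bigl((1-p)^{2^n-2^{n-k}}-(1-p)^{2^n}\bigr),$$ where $[k]=\{0,1,\dots,k-1\}$.
   Context: Boolean functions on $n$ variables are maps $f:\{0,1\}^n\to\{0,1\}$, variables indexed by $[n]=\{0,\dots,n-1\}$. The bias-$p$ probability measure on Boolean functions on $n$ variables is $\Pr_p(f)=p^{|f^{-1}\{1\}|}(1-p)^{|f^{-1}\{0\}|}$ (with $0^0=1$). For a nonempty $I\subseteq[n]$, $f$ is positively canalizing on $I$ if there is a function $\sigma:I\to\{0,1\}$ such that for all $x\in\{0,1\}^n$, if there exists $i\in I$ with $x_i\neq\sigma(i)$ then $f(x)=1$; negatively canalizing on $I$ is defined the same way with $f(x)=0$ in place of $f(x)=1$. $PC^-_I$ (resp. $NC^-_I$) is the set of nonconstant Boolean functions on $n$ variables that are positively (resp. negatively) canalizing on $I$. *)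

theory Defs
  imports Complex_Main
begin

text \<open>Inputs in {0,1}^n are modelled as predicates x :: nat => bool that are False
  at every index >= n (bit i of the input is x i, True = 1).\<close>
definition cube :: "nat \<Rightarrow> (nat \<Rightarrow> bool) set" where
  "cube n = {x. \<forall>i. n \<le> i \<longrightarrow> \<not> x i}"

text \<open>Boolean functions on n variables: maps cube n -> bool, canonically False
  outside the cube (so the set of Boolean functions is finite and in bijection with
  the maps {0,1}^n -> {0,1}).\<close>
definition boolfuns :: "nat \<Rightarrow> ((nat \<Rightarrow> bool) \<Rightarrow> bool) set" where
  "boolfuns n = {f. \<forall>x. x \<notin> cube n \<longrightarrow> \<not> f x}"

text \<open>Bias-p probability of a single Boolean function (0^0 = 1 holds for real ^).\<close>
definition prob_fun :: "nat \<Rightarrow> real \<Rightarrow> ((nat \<Rightarrow> bool) \<Rightarrow> bool) \<Rightarrow> real" where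
  "prob_fun n p f = p ^ card {x \<in> cube n. f x} * (1 - p) ^ card {x \<in> cube n. \<not> f x}"

definition Pr :: "nat \<Rightarrow> real \<Rightarrow> ((nat \<Rightarrow> bool) \<Rightarrow> bool) set \<Rightarrow> real" where
  "Pr n p S = (\<Sum>f \<in> S \<inter> boolfuns n. prob_fun n p f)"

definition constant_fun :: "nat \<Rightarrow> ((nat \<Rightarrow> bool) \<Rightarrow> bool) \<Rightarrow> bool" where
  "constant_fun n f \<longleftrightarrow> (\<exists>c. \<forall>x \<in> cube n. f x = c)"

definition canalizing_on :: "nat \<Rightarrow> bool \<Rightarrow> nat set \<Rightarrow> ((nat \<Rightarrow> bool) \<Rightarrow> bool) \<Rightarrow> bool" where
  "canalizing_on n b I f \<longleftrightarrow>
     (\<exists>\<sigma>. \<forall>x \<in> cube n. (\<exists>i \<in> I. x i \<noteq> \<sigma> i) \<longrightarrow> f x = b)"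

definition PC_minus :: "nat \<Rightarrow> nat set \<Rightarrow> ((nat \<Rightarrow> bool) \<Rightarrow> bool) set" where
  "PC_minus n I = {f \<in> boolfuns n. \<not> constant_fun n f \<and> canalizing_on n True I f}"

definition NC_minus :: "nat \<Rightarrow> nat set \<Rightarrow> ((nat \<Rightarrow> bool) \<Rightarrow> bool) set" where
  "NC_minus n I = {f \<in> boolfuns n. \<not> constant_fun n f \<and> canalizing_on n False I f}"

end

theory Submission
  imports Defs
begin

text \<open>A function that is positively canalizing on [k] with canalizing values \<sigma> is forced
  to be 1 off the subcube {x. x agrees with \<sigma> on [k]} of size 2^(n-k) and is arbitrary on
  it, so the event has probability p^(2^n - 2^(n-k)). For k \<ge> 1 such a function is
  nonconstant unless it is the constant 1, and two different \<sigma> share only the constant 1;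
  summing over the 2^k choices of \<sigma> gives the first formula. Negating the output exchanges
  positive and negative canalization as well as p and 1 - p.\<close>

lemma sum_Pow_power_card_complement:
  fixes p :: real
  assumes "finite D"
  shows "(\<Sum>U\<in>Pow D. p ^ card U * (1 - p) ^ card (D - U)) = 1"
proof -
  have "(\<Prod>x\<in>D. p + (1 - p)) = (\<Sum>U\<in>Pow D. (\<Prod>x\<in>U. p) * (\<Prod>x\<in>D - U. 1 - p))"
    by (rule prod_add[OF assms])
  then show ?thesis by simp
qed

lemma card_cube_agree_initial:
  assumes "k \<le> n"
  shows "card {x \<in> cube n. \<forall>i<k. x i = \<sigma> i} = 2 ^ (n - k)"
proof -
  define g where "g S i = (if i < k then \<sigma> i else i \<in> S)" for S :: "nat set" and i
  have "inj_on g (Pow {k..<n})"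
  proof (rule inj_onI)
    fix S T assume "S \<in> Pow {k..<n}" "T \<in> Pow {k..<n}" "g S = g T"
    then show "S = T"
      by (auto simp: g_def fun_eq_iff) (metis atLeastLessThan_iff not_le subsetD)+
  qed
  moreover have "{x \<in> cube n. \<forall>i<k. x i = \<sigma> i} = g ` Pow {k..<n}"
  proof (intro equalityI subsetI)
    fix x assume x: "x \<in> {x \<in> cube n. \<forall>i<k. x i = \<sigma> i}"
    then have "x = g {i \<in> {k..<n}. x i}"
      by (auto simp: g_def cube_def fun_eq_iff not_less) (meson not_le)
    then show "x \<in> g ` Pow {k..<n}" by blast
  qed (use assms in \<open>auto simp: g_def cube_def\<close>)
  ultimately show ?thesis by (simp add: card_image card_Pow)
qed

lemma card_cube: "card (cube n) = 2 ^ n"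
  using card_cube_agree_initial[of 0 n] by simp

lemma finite_cube: "finite (cube n)"
  using card_cube by (metis card.infinite power_not_zero zero_neq_numeral)

lemma finite_boolfuns: "finite (boolfuns n)"
proof -
  have "boolfuns n \<subseteq> (\<lambda>U x. x \<in> U) ` Pow (cube n)"
  proof
    fix f assume "f \<in> boolfuns n"
    then have "f = (\<lambda>x. x \<in> {x \<in> cube n. f x})" by (auto simp: boolfuns_def)
    then show "f \<in> (\<lambda>U x. x \<in> U) ` Pow (cube n)" by blast
  qed
  then show ?thesis using finite_cube finite_subset by blast
qed

lemma Pr_eq_sum: "S \<subseteq> boolfuns n \<Longrightarrow> Pr n p S = sum (prob_fun n p) S"
  by (simp add: Pr_def Int_absorb2)

lemma PC_minus_subset_boolfuns: "PC_minus n I \<subseteq> boolfuns n"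
  by (auto simp: PC_minus_def)

lemma NC_minus_subset_boolfuns: "NC_minus n I \<subseteq> boolfuns n"
  by (auto simp: NC_minus_def)

lemma Pr_true_on:
  fixes p :: real
  assumes "D \<subseteq> cube n"
  shows "Pr n p {f. \<forall>x\<in>D. f x} = p ^ card D"
proof -
  define C where "C = cube n - D"
  define h where "h U x = (x \<in> D \<union> U)" for U x
  have finC: "finite C" and finD: "finite D"
    using finite_cube assms finite_subset by (auto simp: C_def)
  have "inj_on h (Pow C)"
    by (rule inj_onI) (auto simp: h_def C_def fun_eq_iff)
  moreover have "{f. \<forall>x\<in>D. f x} \<inter> boolfuns n = h ` Pow C"
  proof (intro equalityI subsetI)
    fix f assume f: "f \<in> {f. \<forall>x\<in>D. f x} \<inter> boolfuns n"
    then have "f = h {x \<in> C. f x}"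
      by (auto simp: h_def C_def boolfuns_def fun_eq_iff)
    then show "f \<in> h ` Pow C" by blast
  qed (use assms in \<open>auto simp: h_def C_def boolfuns_def\<close>)
  moreover have "prob_fun n p (h U) = p ^ card D * (p ^ card U * (1 - p) ^ card (C - U))"
    if "U \<in> Pow C" for U
  proof -
    have "{x \<in> cube n. h U x} = D \<union> U" "{x \<in> cube n. \<not> h U x} = C - U"
      using that assms by (auto simp: h_def C_def)
    moreover have "card (D \<union> U) = card D + card U"
      using that finD finC by (intro card_Un_disjoint) (auto simp: C_def intro: finite_subset)
    ultimately show ?thesis by (simp add: prob_fun_def power_add)
  qed
  ultimately show ?thesis
    by (simp add: Pr_def sum.reindex sum_distrib_left[symmetric]
        sum_Pow_power_card_complement[OF finC])
qed

definition true_fun :: "nat \<Rightarrow> (nat \<Rightarrow> bool) \<Rightarrow> bool" where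
  "true_fun n = (\<lambda>x. x \<in> cube n)"

lemma true_fun_in_boolfuns: "true_fun n \<in> boolfuns n"
  by (simp add: true_fun_def boolfuns_def)

lemma boolfuns_eq_true_fun:
  "f \<in> boolfuns n \<Longrightarrow> \<forall>x\<in>cube n. f x \<Longrightarrow> f = true_fun n"
  by (auto simp: true_fun_def boolfuns_def fun_eq_iff)

lemma prob_fun_true_fun: "prob_fun n p (true_fun n) = p ^ 2 ^ n"
  by (simp add: prob_fun_def true_fun_def card_cube)

definition pos_canalizing_with :: "nat \<Rightarrow> nat \<Rightarrow> (nat \<Rightarrow> bool) \<Rightarrow> ((nat \<Rightarrow> bool) \<Rightarrow> bool) set"
  where "pos_canalizing_with n k \<sigma> =
    {f \<in> boolfuns n. \<forall>x\<in>cube n. (\<exists>i<k. x i \<noteq> \<sigma> i) \<longrightarrow> f x}"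

lemma true_fun_in_pos_canalizing_with: "true_fun n \<in> pos_canalizing_with n k \<sigma>"
  by (simp add: pos_canalizing_with_def true_fun_in_boolfuns) (simp add: true_fun_def)

lemma finite_pos_canalizing_with: "finite (pos_canalizing_with n k \<sigma>)"
  using finite_boolfuns by (simp add: pos_canalizing_with_def)

lemma sum_prob_fun_pos_canalizing_with:
  fixes p :: real
  assumes "k \<le> n"
  shows "sum (prob_fun n p) (pos_canalizing_with n k \<sigma>) = p ^ (2 ^ n - 2 ^ (n - k))"
proof -
  define D where "D = cube n - {x \<in> cube n. \<forall>i<k. x i = \<sigma> i}"
  have "pos_canalizing_with n k \<sigma> = {f. \<forall>x\<in>D. f x} \<inter> boolfuns n"
    by (auto simp: pos_canalizing_with_def D_def)
  moreover have "card D = 2 ^ n - 2 ^ (n - k)"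
    unfolding D_def
    by (subst card_Diff_subset) (auto simp: finite_cube card_cube card_cube_agree_initial assms)
  ultimately show ?thesis
    using Pr_true_on[of D n p] by (simp add: Pr_def D_def)
qed

lemma pos_canalizing_with_Int:
  assumes "\<sigma> \<in> cube k" "\<tau> \<in> cube k" "\<sigma> \<noteq> \<tau>"
  shows "pos_canalizing_with n k \<sigma> \<inter> pos_canalizing_with n k \<tau> = {true_fun n}"
proof -
  obtain j where j: "\<sigma> j \<noteq> \<tau> j" using assms(3) by blast
  with assms(1,2) have "j < k" by (auto simp: cube_def) (meson not_le)
  have "f = true_fun n"
    if "f \<in> pos_canalizing_with n k \<sigma>" "f \<in> pos_canalizing_with n k \<tau>" for f
  proof (rule boolfuns_eq_true_fun)
    show "f \<in> boolfuns n" using that by (simp add: pos_canalizing_with_def)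
    show "\<forall>x\<in>cube n. f x"
    proof
      fix x assume "x \<in> cube n"
      moreover have "x j \<noteq> \<sigma> j \<or> x j \<noteq> \<tau> j" using j by blast
      ultimately show "f x" using that \<open>j < k\<close> by (auto simp: pos_canalizing_with_def)
    qed
  qed
  then show ?thesis using true_fun_in_pos_canalizing_with by blast
qed

lemma PC_minus_initial_eq_UN:
  assumes "1 \<le> k" "k \<le> n"
  shows "PC_minus n {..<k} = (\<Union>\<sigma>\<in>cube k. pos_canalizing_with n k \<sigma> - {true_fun n})"
proof (intro equalityI subsetI)
  fix f assume f: "f \<in> PC_minus n {..<k}"
  then have fb: "f \<in> boolfuns n" and f_nc: "\<not> constant_fun n f"
    by (simp_all add: PC_minus_def)
  from f obtain \<sigma> where \<sigma>: "\<forall>x\<in>cube n. (\<exists>i<k. x i \<noteq> \<sigma> i) \<longrightarrow> f x"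
    by (auto simp: PC_minus_def canalizing_on_def)
  define \<sigma>' where "\<sigma>' i = (i < k \<and> \<sigma> i)" for i
  have "\<sigma>' \<in> cube k" by (simp add: \<sigma>'_def cube_def)
  moreover have "f \<in> pos_canalizing_with n k \<sigma>'"
    using fb \<sigma> by (auto simp: pos_canalizing_with_def \<sigma>'_def)
  moreover have "f \<noteq> true_fun n"
    using f_nc by (auto simp: constant_fun_def true_fun_def)
  ultimately show "f \<in> (\<Union>\<sigma>\<in>cube k. pos_canalizing_with n k \<sigma> - {true_fun n})" by blast
next
  fix f assume "f \<in> (\<Union>\<sigma>\<in>cube k. pos_canalizing_with n k \<sigma> - {true_fun n})"
  then obtain \<sigma> where f: "f \<in> pos_canalizing_with n k \<sigma>" and f_ne: "f \<noteq> true_fun n" by blast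
  then have fb: "f \<in> boolfuns n"
    and f_can: "\<forall>x\<in>cube n. (\<exists>i<k. x i \<noteq> \<sigma> i) \<longrightarrow> f x"
    by (simp_all add: pos_canalizing_with_def)
  define x0 where "x0 i = (i = 0 \<and> \<not> \<sigma> 0)" for i :: nat
  have x0: "x0 \<in> cube n" using assms by (simp add: x0_def cube_def)
  have "\<exists>i<k. x0 i \<noteq> \<sigma> i"
    using assms by (intro exI[of _ 0]) (simp add: x0_def)
  with f_can x0 have "f x0" by blast
  with x0 fb f_ne have "\<not> constant_fun n f"
    using boolfuns_eq_true_fun by (metis constant_fun_def)
  moreover have "canalizing_on n True {..<k} f"
    using f_can by (auto simp: canalizing_on_def)
  ultimately show "f \<in> PC_minus n {..<k}" using fb by (simp add: PC_minus_def)
qed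

lemma Pr_PC_minus_initial:
  fixes p :: real
  assumes "1 \<le> k" "k \<le> n"
  shows "Pr n p (PC_minus n {..<k}) = 2 ^ k * (p ^ (2 ^ n - 2 ^ (n - k)) - p ^ 2 ^ n)"
proof -
  have "Pr n p (PC_minus n {..<k}) =
      sum (prob_fun n p) (\<Union>\<sigma>\<in>cube k. pos_canalizing_with n k \<sigma> - {true_fun n})"
    by (subst Pr_eq_sum[OF PC_minus_subset_boolfuns]) (simp only: PC_minus_initial_eq_UN[OF assms])
  also have "\<dots> = (\<Sum>\<sigma>\<in>cube k. sum (prob_fun n p) (pos_canalizing_with n k \<sigma> - {true_fun n}))"
    using pos_canalizing_with_Int
    by (intro sum.UNION_disjoint) (auto simp: finite_cube finite_pos_canalizing_with, blast)
  also have "\<dots> = (\<Sum>\<sigma>\<in>cube k. p ^ (2 ^ n - 2 ^ (n - k)) - p ^ 2 ^ n)"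
    by (simp add: sum_diff1 finite_pos_canalizing_with true_fun_in_pos_canalizing_with
        sum_prob_fun_pos_canalizing_with[OF assms(2)] prob_fun_true_fun)
  finally show ?thesis by (simp add: card_cube)
qed

definition compl_fun :: "nat \<Rightarrow> ((nat \<Rightarrow> bool) \<Rightarrow> bool) \<Rightarrow> (nat \<Rightarrow> bool) \<Rightarrow> bool" where
  "compl_fun n f = (\<lambda>x. x \<in> cube n \<and> \<not> f x)"

lemma compl_fun_in_boolfuns: "compl_fun n f \<in> boolfuns n"
  by (simp add: compl_fun_def boolfuns_def)

lemma compl_fun_compl_fun: "f \<in> boolfuns n \<Longrightarrow> compl_fun n (compl_fun n f) = f"
  by (auto simp: compl_fun_def boolfuns_def fun_eq_iff)

lemma constant_fun_compl_fun: "constant_fun n (compl_fun n f) \<longleftrightarrow> constant_fun n f"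
  unfolding constant_fun_def compl_fun_def by (metis (full_types))

lemma canalizing_on_compl_fun:
  "canalizing_on n b I (compl_fun n f) \<longleftrightarrow> canalizing_on n (\<not> b) I f"
  by (auto simp: canalizing_on_def compl_fun_def)

lemma prob_fun_compl_fun: "prob_fun n p (compl_fun n f) = prob_fun n (1 - p) f"
proof -
  have "{x \<in> cube n. compl_fun n f x} = {x \<in> cube n. \<not> f x}"
    "{x \<in> cube n. \<not> compl_fun n f x} = {x \<in> cube n. f x}"
    by (auto simp: compl_fun_def)
  then show ?thesis by (simp add: prob_fun_def mult.commute)
qed

lemma bij_betw_compl_fun_PC_NC: "bij_betw (compl_fun n) (PC_minus n I) (NC_minus n I)"
proof (rule bij_betw_byWitness[where f' = "compl_fun n"])
  show "compl_fun n ` PC_minus n I \<subseteq> NC_minus n I"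
    "compl_fun n ` NC_minus n I \<subseteq> PC_minus n I"
    by (auto simp: PC_minus_def NC_minus_def compl_fun_in_boolfuns constant_fun_compl_fun
        canalizing_on_compl_fun)
qed (auto simp: PC_minus_def NC_minus_def compl_fun_compl_fun)

lemma Pr_NC_minus_eq_Pr_PC_minus: "Pr n p (NC_minus n I) = Pr n (1 - p) (PC_minus n I)"
proof -
  have "Pr n p (NC_minus n I) = sum (prob_fun n p) (NC_minus n I)"
    by (rule Pr_eq_sum[OF NC_minus_subset_boolfuns])
  also have "\<dots> = (\<Sum>f\<in>PC_minus n I. prob_fun n p (compl_fun n f))"
    by (rule sum.reindex_bij_betw[OF bij_betw_compl_fun_PC_NC, symmetric])
  also have "\<dots> = Pr n (1 - p) (PC_minus n I)"
    by (simp add: Pr_eq_sum[OF PC_minus_subset_boolfuns] prob_fun_compl_fun)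
  finally show ?thesis .
qed

theorem mainTheorem6:
  fixes n k :: nat and p :: real
  assumes "n \<ge> 1" and "0 \<le> p" and "p \<le> 1" and "1 \<le> k" and "k < n"
  shows "Pr n p (PC_minus n {..<k}) = 2 ^ k * (p ^ (2 ^ n - 2 ^ (n - k)) - p ^ (2 ^ n))
         \<and> Pr n p (NC_minus n {..<k}) =
           2 ^ k * ((1 - p) ^ (2 ^ n - 2 ^ (n - k)) - (1 - p) ^ (2 ^ n))"
  \<comment> \<open>The formulas hold for every real p and all 1 \<le> k \<le> n.\<close>
  using assms Pr_PC_minus_initial[of k n p] Pr_PC_minus_initial[of k n "1 - p"]
    Pr_NC_minus_eq_Pr_PC_minus[of n p "{..<k}"]
  by simp

end
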